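(* Let $A$ be a finite set, $X=A^{\mathbb N}$ with the left shift $\sigma$, and $\phi\in C(X)$. For $n\ge1$ define $\phi^{(n)}:A^n\to\mathbb R$ by $\phi^{(n)}(a_0\dots a_{n-1})=\phi(a_0\dots a_{n-1}a_0\dots a_{n-1}a_0\dots)$ (the periodic sequence with period word $a_0\dots a_{n-1}$), and $U_n:A^n\to\mathbb R$ by $U_n(a_0\dots a_{n-1})=\sum_{i=0}^{n-1}\phi^{(n)}(a_ia_{i+1}\dots a_{i+n-1})$, indices taken modulo $n$. Let $\mu_n$ be the probability distribution on $A^n$ maximising $H(\mu)+\langle U_n,\mu\rangle$ over all probability distributions $\mu$ on $A^n$ (namely $\mu_n(w)=e^{U_n(w)}/\sum_{w'\in A^n}e^{U_n(w')}$), regarded as a Borel probability measure on $X$ by identifying each word $w\in A^n$ with the periodic sequence $www\dots$. Then every weak limit point $\mu$ of $(\mu_n)_{n\ge1}$ is an equilibrium state for $\phi$, i.e. $\mu$ is $\sigma$-invariant and $h(\mu)+\langle\phi,\mu\rangle=\sup\{h(\nu)+\langle\phi,\nu\rangle:\nu\in\mathcal M_\sigma(X)\}$.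
   Context: $X=A^{\mathbb N}$ has the product topology (metric $d(\underline{x},\underline{y})=2^{-\min\{k:x_k\neq y_k\}}$); $C(X)$ is the space of continuous real functions on $X$. For a probability distribution $\mu$ on a finite set $Y$, $H(\mu)=-\sum_{y}\mu(y)\log\mu(y)$ and $\langle U,\mu\rangle=\sum_y\mu(y)U(y)$. $\mathcal M_\sigma(X)$ is the set of $\sigma$-invariant Borel probability measures on $X$, with the weak topology. For $\nu\in\mathcal M_\sigma(X)$, $H_n(\nu)=-\sum_{a_0,\dots,a_{n-1}}\nu[a_0\dots a_{n-1}]\log\nu[a_0\dots a_{n-1}]$ (cylinder probabilities, $0\log0=0$) and $h(\nu)=\lim_n\frac1nH_n(\nu)$; $\langle\phi,\nu\rangle=\int\phi\,d\nu$. *)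

theory Defs
  imports "HOL-Analysis.Analysis" "HOL-Probability.Probability"
begin

text \<open>The full shift X = A^N is the type nat => 'a with 'a finite and discrete;
  its topology is the product topology (Function_Topology), Borel sets are borel.\<close>

definition shift :: "(nat \<Rightarrow> 'a) \<Rightarrow> (nat \<Rightarrow> 'a)" where
  "shift x = (\<lambda>i. x (Suc i))"

definition periodic_pt :: "'a list \<Rightarrow> (nat \<Rightarrow> 'a)" where
  "periodic_pt w = (\<lambda>i. w ! (i mod length w))"

definition phi_word :: "((nat \<Rightarrow> 'a) \<Rightarrow> real) \<Rightarrow> 'a list \<Rightarrow> real" where
  "phi_word \<phi> w = \<phi> (periodic_pt w)"

definition U_word :: "((nat \<Rightarrow> 'a) \<Rightarrow> real) \<Rightarrow> 'a list \<Rightarrow> real" where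
  "U_word \<phi> w = (\<Sum>i<length w. phi_word \<phi> (rotate i w))"

definition words :: "nat \<Rightarrow> 'a list set" where
  "words n = {w. length w = n}"

definition partition_fn :: "((nat \<Rightarrow> 'a) \<Rightarrow> real) \<Rightarrow> nat \<Rightarrow> real" where
  "partition_fn \<phi> n = (\<Sum>w\<in>words n. exp (U_word \<phi> w))"

definition mu_n :: "((nat \<Rightarrow> 'a::topological_space) \<Rightarrow> real) \<Rightarrow> nat \<Rightarrow> (nat \<Rightarrow> 'a) measure" where
  "mu_n \<phi> n = measure_of UNIV (sets borel)
     (\<lambda>B. ennreal (\<Sum>w\<in>{w\<in>words n. periodic_pt w \<in> B}. exp (U_word \<phi> w) / partition_fn \<phi> n))"

definition borel_prob :: "(nat \<Rightarrow> 'a::topological_space) measure \<Rightarrow> bool" where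
  "borel_prob \<nu> \<longleftrightarrow> prob_space \<nu> \<and> sets \<nu> = sets borel"

definition invariant_measures :: "(nat \<Rightarrow> 'a::topological_space) measure set" where
  "invariant_measures = {\<nu>. borel_prob \<nu> \<and> distr \<nu> borel shift = \<nu>}"

definition cylinder :: "'a list \<Rightarrow> (nat \<Rightarrow> 'a) set" where
  "cylinder w = {x. \<forall>i<length w. x i = w ! i}"

definition block_entropy :: "(nat \<Rightarrow> 'a::topological_space) measure \<Rightarrow> nat \<Rightarrow> real" where
  "block_entropy \<nu> n = - (\<Sum>w\<in>words n. measure \<nu> (cylinder w) * ln (measure \<nu> (cylinder w)))"

definition ks_entropy :: "(nat \<Rightarrow> 'a::topological_space) measure \<Rightarrow> real" where
  "ks_entropy \<nu> = lim (\<lambda>n. block_entropy \<nu> n / real n)"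

definition weak_conv :: "(nat \<Rightarrow> (nat \<Rightarrow> 'a::topological_space) measure) \<Rightarrow> (nat \<Rightarrow> 'a) measure \<Rightarrow> bool" where
  "weak_conv M \<mu> \<longleftrightarrow> (\<forall>f :: (nat \<Rightarrow> 'a) \<Rightarrow> real. continuous_on UNIV f \<longrightarrow>
      (\<lambda>k. integral\<^sup>L (M k) f) \<longlonglongrightarrow> integral\<^sup>L \<mu> f)"

definition weak_limit_point :: "(nat \<Rightarrow> (nat \<Rightarrow> 'a::topological_space) measure) \<Rightarrow> (nat \<Rightarrow> 'a) measure \<Rightarrow> bool" where
  "weak_limit_point M \<mu> \<longleftrightarrow> (\<exists>r. strict_mono r \<and> weak_conv (M \<circ> r) \<mu>)"

definition equilibrium_state :: "((nat \<Rightarrow> 'a::topological_space) \<Rightarrow> real) \<Rightarrow> (nat \<Rightarrow> 'a) measure \<Rightarrow> bool" where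
  "equilibrium_state \<phi> \<mu> \<longleftrightarrow> \<mu> \<in> invariant_measures \<and>
     ks_entropy \<mu> + integral\<^sup>L \<mu> \<phi> = (SUP \<nu>\<in>invariant_measures. ks_entropy \<nu> + integral\<^sup>L \<nu> \<phi>)"

end

theory Submission
  imports Defs
begin

text \<open>For an invariant measure \<nu>, Gibbs' inequality on words of length n gives
  H_n(\<nu>) + \<Sum> \<nu>[w] U_n(w) \<le> ln Z_n = H_n(\<mu>_n) + n \<langle>\<phi>, \<mu>_n\<rangle>, and uniform continuity of \<phi>
  makes \<Sum> \<nu>[w] U_n(w) fall short of n \<langle>\<phi>, \<nu>\<rangle> by at most o(n), the error coming from the
  windows that wrap around the period. Since h(\<nu>) \<le> H_n(\<nu>)/n by Fekete's lemma, this yields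
  h(\<nu>) + \<langle>\<phi>, \<nu>\<rangle> \<le> H_n(\<mu>_n)/n + \<langle>\<phi>, \<mu>_n\<rangle> + o(1). Subadditivity bounds H_n(\<mu>_n)/n by
  H_m(\<mu>_n)/m + O(m/n) uniformly; cylinders are clopen, so H_m(\<mu>_n) \<rightarrow> H_m(\<mu>) along the
  subsequence, and letting m \<rightarrow> \<infinity> gives h(\<nu>) + \<langle>\<phi>, \<nu>\<rangle> \<le> h(\<mu>) + \<langle>\<phi>, \<mu>\<rangle>. The limit \<mu> is
  invariant because each \<mu>_n is (rotating the period word shifts the periodic point) and
  shift-preimages of cylinders are clopen as well.\<close>

subsection \<open>Cylinders and continuous functions\<close>

lemma compact_UNIV_fullshift: "compact (UNIV :: (nat \<Rightarrow> 'a::{finite,topological_space}) set)"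
proof -
  have "compact_space (euclidean :: 'a topology)"
    unfolding compact_space_def by (simp add: finite_imp_compact)
  then have "compact_space (product_topology (\<lambda>i::nat. euclidean :: 'a topology) UNIV)"
    by (simp add: compact_space_product_topology)
  then show ?thesis
    by (simp add: euclidean_product_topology compact_space_def)
qed

lemma continuous_on_indicator_clopen:
  fixes C :: "'a::topological_space set"
  assumes "open C" "closed C"
  shows "continuous_on UNIV (indicator C :: 'a \<Rightarrow> real)"
  unfolding continuous_on_open_invariant
proof (intro allI impI)
  fix B :: "real set"
  have "indicator C -` B = (if 1 \<in> B then C else {}) \<union> (if 0 \<in> B then - C else {})"
    by (cases "(1::real) \<in> B"; cases "(0::real) \<in> B") (auto simp: indicator_def of_bool_def split: if_splits)
  moreover have "open \<dots>" using assms by (auto simp: open_Compl)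
  ultimately show "\<exists>A. open A \<and> A \<inter> UNIV = indicator C -` B \<inter> UNIV" by auto
qed

lemma open_cylinder: "open (cylinder (w :: 'a::discrete_topology list))"
proof -
  have "cylinder w = {x. \<forall>i\<in>{..<length w}. x (id i) \<in> {w ! i}}"
    by (auto simp: cylinder_def)
  also have "open \<dots>"
    by (rule product_topology_basis') (auto simp: discrete_topology_class.open_discrete)
  finally show ?thesis .
qed

lemma closed_cylinder: "closed (cylinder (w :: 'a::discrete_topology list))"
proof -
  have "cylinder w = (\<Inter>i<length w. (\<lambda>x. x i) -` {w ! i})"
    by (auto simp: cylinder_def)
  also have "closed \<dots>"
    by (intro closed_INT ballI closed_vimage continuous_on_product_coordinates)
      (simp add: closed_def discrete_topology_class.open_discrete)
  finally show ?thesis .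
qed

lemma borel_cylinder [measurable]: "cylinder (w :: 'a::discrete_topology list) \<in> sets borel"
  by (rule borel_open[OF open_cylinder])

definition initial_word :: "nat \<Rightarrow> (nat \<Rightarrow> 'a) \<Rightarrow> 'a list" where
  "initial_word n x = map x [0..<n]"

lemma length_initial_word [simp]: "length (initial_word n x) = n"
  by (simp add: initial_word_def)

lemma cylinder_initial_word: "cylinder (initial_word n x) = {y. \<forall>i<n. y i = x i}"
  by (auto simp: cylinder_def initial_word_def)

lemma mem_cylinder_iff_initial_word:
  assumes "length w = n"
  shows "x \<in> cylinder w \<longleftrightarrow> w = initial_word n x"
proof
  assume "x \<in> cylinder w"
  then show "w = initial_word n x"
    using assms by (intro nth_equalityI) (auto simp: cylinder_def initial_word_def)
qed (simp add: cylinder_initial_word)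

lemma open_contains_cylinder:
  assumes "open (S :: (nat \<Rightarrow> 'a::topological_space) set)" "x \<in> S"
  obtains k where "cylinder (initial_word k x) \<subseteq> S"
proof -
  have "openin (product_topology (\<lambda>i. euclidean) UNIV) S"
    using assms(1) by (simp add: open_fun_def)
  from product_topology_open_contains_basis[OF this assms(2)]
  obtain X where X: "x \<in> (\<Pi>\<^sub>E i\<in>UNIV. X i)" "finite {i. X i \<noteq> topspace (euclidean::'a topology)}"
     "(\<Pi>\<^sub>E i\<in>UNIV. X i) \<subseteq> S" by blast
  obtain k where k: "{i. X i \<noteq> UNIV} \<subseteq> {..<k}" using finite_nat_bounded X(2) by auto
  have "cylinder (initial_word k x) \<subseteq> (\<Pi>\<^sub>E i\<in>UNIV. X i)"
  proof
    fix y assume y: "y \<in> cylinder (initial_word k x)"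
    have "y i \<in> X i" for i
    proof (cases "i < k")
      case True then show ?thesis using y X(1) by (auto simp: cylinder_initial_word)
    next
      case False then show ?thesis using k by auto
    qed
    then show "y \<in> (\<Pi>\<^sub>E i\<in>UNIV. X i)" by auto
  qed
  then show thesis using X(3) by (intro that) (rule subset_trans)
qed

lemma continuous_on_fullshift_uniform:
  fixes \<phi> :: "(nat \<Rightarrow> 'a::{finite,discrete_topology}) \<Rightarrow> real"
  assumes "continuous_on UNIV \<phi>" "e > 0"
  obtains k where "\<And>x y. (\<forall>i<k. x i = y i) \<Longrightarrow> \<bar>\<phi> x - \<phi> y\<bar> < e"
proof -
  have "\<exists>k. \<forall>y. (\<forall>i<k. y i = z i) \<longrightarrow> \<bar>\<phi> y - \<phi> z\<bar> < e / 2" for z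
  proof -
    obtain A where A: "open A" "A \<inter> UNIV = \<phi> -` ball (\<phi> z) (e / 2) \<inter> UNIV"
      using assms(1) unfolding continuous_on_open_invariant by (meson open_ball)
    have "z \<in> A" using A assms(2) by auto
    then obtain k where k: "cylinder (initial_word k z) \<subseteq> A"
      using open_contains_cylinder A(1) by blast
    show ?thesis
    proof (intro exI allI impI)
      fix y assume "\<forall>i<k. y i = z i"
      then have "y \<in> A" using k by (auto simp: cylinder_initial_word)
      then show "\<bar>\<phi> y - \<phi> z\<bar> < e / 2" using A(2) by (auto simp: dist_real_def abs_minus_commute)
    qed
  qed
  then obtain K where K: "\<And>z y. (\<forall>i<K z. y i = z i) \<Longrightarrow> \<bar>\<phi> y - \<phi> z\<bar> < e / 2"
    by metis
  have "UNIV \<subseteq> (\<Union>z. cylinder (initial_word (K z) z))"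
    by (auto simp: cylinder_initial_word)
  then obtain C where C: "finite C" "UNIV \<subseteq> (\<Union>z\<in>C. cylinder (initial_word (K z) z))"
    by (rule compactE_image[OF compact_UNIV_fullshift open_cylinder]) auto
  show thesis
  proof
    fix x y :: "nat \<Rightarrow> 'a" assume xy: "\<forall>i<(\<Sum>z\<in>C. K z). x i = y i"
    obtain z where z: "z \<in> C" "x \<in> cylinder (initial_word (K z) z)" using C(2) by blast
    have "K z \<le> (\<Sum>z\<in>C. K z)" by (rule member_le_sum[OF z(1) _ C(1)]) auto
    then have "\<forall>i<K z. x i = z i" "\<forall>i<K z. y i = z i"
      using z(2) xy by (auto simp: cylinder_initial_word)
    then have "\<bar>\<phi> x - \<phi> z\<bar> < e / 2" "\<bar>\<phi> y - \<phi> z\<bar> < e / 2" using K by auto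
    then show "\<bar>\<phi> x - \<phi> y\<bar> < e" by linarith
  qed
qed

lemma continuous_on_fullshift_bounded:
  fixes \<phi> :: "(nat \<Rightarrow> 'a::{finite,topological_space}) \<Rightarrow> real"
  assumes "continuous_on UNIV \<phi>"
  obtains B where "\<And>x. \<bar>\<phi> x\<bar> \<le> B"
  using compact_imp_bounded[OF compact_continuous_image[OF assms compact_UNIV_fullshift]]
  by (auto simp: bounded_iff)

lemma cylinder_Int_cylinder:
  "cylinder v \<inter> cylinder w \<in> insert {} (range (cylinder :: 'a list \<Rightarrow> (nat \<Rightarrow> 'a) set))"
proof (cases "cylinder v \<inter> cylinder w = {}")
  case False
  then obtain x where "x \<in> cylinder v" "x \<in> cylinder w" by blast
  then have "cylinder v = {y. \<forall>i<length v. y i = x i}" "cylinder w = {y. \<forall>i<length w. y i = x i}"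
    by (auto simp: cylinder_def)
  then have "cylinder v \<inter> cylinder w = cylinder (initial_word (max (length v) (length w)) x)"
    unfolding cylinder_initial_word by (auto simp: less_max_iff_disj)
  then show ?thesis by simp
qed simp

lemma Int_stable_cylinders: "Int_stable (insert {} (range (cylinder :: 'a list \<Rightarrow> (nat \<Rightarrow> 'a) set)))"
  unfolding Int_stable_def using cylinder_Int_cylinder by auto

lemma sets_borel_eq_cylinders:
  "sets (borel :: (nat \<Rightarrow> 'a::{finite,discrete_topology}) measure)
     = sigma_sets UNIV (insert {} (range cylinder))"
proof -
  have opn: "\<And>B. B \<in> range (cylinder :: 'a list \<Rightarrow> _) \<Longrightarrow> open B"
    by (auto simp: open_cylinder)
  have "\<forall>S. open S \<longrightarrow> (\<forall>x\<in>S. \<exists>B\<in>range (cylinder :: 'a list \<Rightarrow> _). x \<in> B \<and> B \<subseteq> S)"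
  proof (intro allI impI ballI)
    fix S and x :: "nat \<Rightarrow> 'a" assume "open S" "x \<in> S"
    then obtain k where "cylinder (initial_word k x) \<subseteq> S" by (rule open_contains_cylinder)
    moreover have "x \<in> cylinder (initial_word k x)" by (simp add: cylinder_initial_word)
    ultimately show "\<exists>B\<in>range cylinder. x \<in> B \<and> B \<subseteq> S" by blast
  qed
  then have basis: "topological_basis (range (cylinder :: 'a list \<Rightarrow> _))"
    using topological_basis_iff[OF opn] by blast
  have "sets (borel :: (nat \<Rightarrow> 'a) measure) = sigma_sets UNIV (range cylinder)"
    by (subst borel_eq_countable_basis[OF _ basis]) (simp_all add: sets_measure_of)
  also have "\<dots> = sigma_sets UNIV (insert {} (range cylinder))"
    by (rule sigma_sets_eqI) (auto intro: sigma_sets.Empty)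
  finally show ?thesis .
qed

subsection \<open>Measures on the full shift\<close>

lemma borel_probD:
  assumes "borel_prob \<rho>"
  shows "prob_space \<rho>" "sets \<rho> = sets borel" "space \<rho> = UNIV"
  using assms sets_eq_imp_space_eq[of \<rho> borel] by (auto simp: borel_prob_def)

lemma integrable_continuous_fullshift:
  fixes f :: "(nat \<Rightarrow> 'a::{finite,discrete_topology}) \<Rightarrow> real"
  assumes "borel_prob \<rho>" "continuous_on UNIV f"
  shows "integrable \<rho> f"
proof -
  interpret prob_space \<rho> using borel_probD[OF assms(1)] by simp
  obtain B where "\<And>x. \<bar>f x\<bar> \<le> B" using continuous_on_fullshift_bounded[OF assms(2)] by blast
  moreover have "f \<in> borel_measurable \<rho>"
    using borel_measurable_continuous_onI[OF assms(2)] measurable_cong_sets borel_probD(2)[OF assms(1)]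
    by blast
  ultimately show ?thesis by (intro integrable_const_bound[of f B]) auto
qed

lemma mem_words_iff [simp]: "w \<in> words n \<longleftrightarrow> length w = n"
  by (simp add: words_def)

lemma finite_words [simp]: "finite (words n :: 'a::finite list set)"
  by (simp add: words_def finite_list_length)

lemma card_words: "card (words n :: 'a::finite list set) = CARD('a) ^ n"
  using card_lists_length_eq[of "UNIV :: 'a set" n] by (simp add: words_def)

lemma words_nonempty: "words n \<noteq> {}"
  using mem_words_iff[of "replicate n undefined" n] by (metis empty_iff length_replicate)

lemma disjoint_family_on_cylinder: "disjoint_family_on cylinder (words n)"
  unfolding disjoint_family_on_def
  by (auto simp: mem_cylinder_iff_initial_word)

lemma UN_words_cylinder: "(\<Union>w\<in>words n. cylinder w) = UNIV"
  by (auto intro!: UN_I[of "initial_word n x" for x] simp: cylinder_initial_word)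

lemma (in finite_measure) sum_measure_Int_partition:
  assumes "finite I" "B ` I \<subseteq> sets M" "disjoint_family_on B I" "(\<Union>i\<in>I. B i) = space M"
    and "A \<in> sets M"
  shows "(\<Sum>i\<in>I. measure M (A \<inter> B i)) = measure M A"
proof -
  have "(\<Sum>i\<in>I. measure M (A \<inter> B i)) = measure M (\<Union>i\<in>I. A \<inter> B i)"
    using assms by (intro finite_measure_finite_Union[symmetric]) (auto simp: disjoint_family_on_def)
  also have "(\<Union>i\<in>I. A \<inter> B i) = A" using assms(4,5) sets.sets_into_space by auto
  finally show ?thesis .
qed

lemma sum_measure_Int_cylinders:
  fixes \<rho> :: "(nat \<Rightarrow> 'a::{finite,discrete_topology}) measure"
  assumes "borel_prob \<rho>" "A \<in> sets borel"
  shows "(\<Sum>w\<in>words n. measure \<rho> (A \<inter> cylinder w)) = measure \<rho> A"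
proof -
  interpret prob_space \<rho> using borel_probD[OF assms(1)] by simp
  show ?thesis
    using assms borel_probD[OF assms(1)]
    by (intro sum_measure_Int_partition disjoint_family_on_cylinder) (auto simp: UN_words_cylinder)
qed

lemma sum_measure_cylinders:
  fixes \<rho> :: "(nat \<Rightarrow> 'a::{finite,discrete_topology}) measure"
  assumes "borel_prob \<rho>"
  shows "(\<Sum>w\<in>words n. measure \<rho> (cylinder w)) = 1"
proof -
  interpret prob_space \<rho> using borel_probD[OF assms] by simp
  show ?thesis
    using sum_measure_Int_cylinders[OF assms, of UNIV n] prob_space borel_probD(3)[OF assms] by simp
qed

lemma initial_word_eq_sum_indicator:
  fixes g :: "'a::finite list \<Rightarrow> real"
  shows "g (initial_word n x) = (\<Sum>w\<in>words n. g w * indicator (cylinder w) x)"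
proof -
  have "(\<Sum>w\<in>words n. g w * indicator (cylinder w) x) = (\<Sum>w\<in>words n. if w = initial_word n x then g w else 0)"
    by (intro sum.cong refl) (auto simp: mem_cylinder_iff_initial_word)
  also have "\<dots> = g (initial_word n x)" by (simp add: sum.delta)
  finally show ?thesis by simp
qed

lemma
  fixes \<rho> :: "(nat \<Rightarrow> 'a::{finite,discrete_topology}) measure" and g :: "'a list \<Rightarrow> real"
  assumes "borel_prob \<rho>"
  shows integrable_initial_word: "integrable \<rho> (\<lambda>x. g (initial_word n x))"
    and integral_initial_word:
      "integral\<^sup>L \<rho> (\<lambda>x. g (initial_word n x)) = (\<Sum>w\<in>words n. g w * measure \<rho> (cylinder w))"
proof -
  interpret prob_space \<rho> using borel_probD[OF assms] by simp
  have int: "integrable \<rho> (\<lambda>x. g w * indicator (cylinder w) x)" for w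
    using borel_probD(2)[OF assms]
    by (intro integrable_mult_right integrable_real_indicator) (auto simp: less_top[symmetric])
  show "integrable \<rho> (\<lambda>x. g (initial_word n x))"
    unfolding initial_word_eq_sum_indicator[of g] by (intro Bochner_Integration.integrable_sum int)
  have "integral\<^sup>L \<rho> (\<lambda>x. \<Sum>w\<in>words n. g w * indicator (cylinder w) x)
      = (\<Sum>w\<in>words n. integral\<^sup>L \<rho> (\<lambda>x. g w * indicator (cylinder w) x))"
    by (rule Bochner_Integration.integral_sum) (rule int)
  then show "integral\<^sup>L \<rho> (\<lambda>x. g (initial_word n x)) = (\<Sum>w\<in>words n. g w * measure \<rho> (cylinder w))"
    unfolding initial_word_eq_sum_indicator[of g]
    using borel_probD(3)[OF assms] by (simp add: Bochner_Integration.integral_indicator)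
qed

subsection \<open>The shift\<close>

lemma funpow_shift: "shift ^^ k = (\<lambda>x j. x (k + j))"
  by (induction k) (auto simp: shift_def)

lemma continuous_on_funpow_shift: "continuous_on UNIV (shift ^^ k :: (nat \<Rightarrow> 'a::topological_space) \<Rightarrow> _)"
  unfolding funpow_shift by (intro continuous_on_coordinatewise_then_product) simp

lemma measurable_funpow_shift [measurable]: "shift ^^ k \<in> borel_measurable borel"
  by (rule borel_measurable_continuous_onI[OF continuous_on_funpow_shift])

lemma sets_vimage_funpow_shift: "A \<in> sets borel \<Longrightarrow> (shift ^^ k) -` A \<in> sets borel"
  by (rule measurable_sets_borel[OF measurable_funpow_shift])

lemma continuous_on_shift: "continuous_on UNIV (shift :: (nat \<Rightarrow> 'a::topological_space) \<Rightarrow> _)"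
  using continuous_on_funpow_shift[of 1] by simp

lemma borel_measurable_shift [measurable]: "shift \<in> borel_measurable borel"
  using measurable_funpow_shift[of 1] by simp

lemma periodic_pt_rotate:
  assumes "w \<noteq> []"
  shows "periodic_pt (rotate k w) = (shift ^^ k) (periodic_pt w)"
proof
  fix j
  have "rotate k w ! (j mod length w) = w ! ((k + j mod length w) mod length w)"
    using assms by (simp add: nth_rotate)
  also have "(k + j mod length w) mod length w = (k + j) mod length w"
    by (simp add: mod_add_right_eq)
  finally show "periodic_pt (rotate k w) j = (shift ^^ k) (periodic_pt w) j"
    by (simp add: periodic_pt_def funpow_shift)
qed

lemma cylinder_append: "cylinder (u @ v) = cylinder u \<inter> (shift ^^ length u) -` cylinder v"
proof -
  have "(\<forall>i<length u + length v. x i = (u @ v) ! i)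
      \<longleftrightarrow> (\<forall>i<length u. x i = u ! i) \<and> (\<forall>j<length v. x (length u + j) = v ! j)" for x
  proof safe
    fix i assume "\<forall>i<length u. x i = u ! i" "\<forall>j<length v. x (length u + j) = v ! j"
      "i < length u + length v"
    then show "x i = (u @ v) ! i"
      by (cases "i < length u") (auto simp: nth_append dest: spec[of _ "i - length u"])
  qed (auto simp: nth_append dest: spec[of _ "length u + _"])
  then show ?thesis by (auto simp: cylinder_def funpow_shift)
qed

lemma invariant_measuresD:
  assumes "\<rho> \<in> invariant_measures"
  shows "borel_prob \<rho>" "distr \<rho> borel shift = \<rho>"
  using assms by (auto simp: invariant_measures_def)

lemma distr_funpow_shift_invariant:
  assumes "\<rho> \<in> invariant_measures"
  shows "distr \<rho> borel (shift ^^ k) = \<rho>"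
proof (induction k)
  case 0
  show ?case using borel_probD(2,3)[OF invariant_measuresD(1)[OF assms]]
    by (simp add: distr_id2)
next
  case (Suc k)
  have meas: "shift \<in> measurable \<rho> borel" "shift ^^ k \<in> measurable borel borel"
    using borel_probD(2)[OF invariant_measuresD(1)[OF assms]] by (auto cong: measurable_cong_sets)
  have "distr \<rho> borel (shift ^^ Suc k) = distr \<rho> borel ((shift ^^ k) \<circ> shift)"
    by (simp only: funpow_Suc_right)
  also have "\<dots> = distr (distr \<rho> borel shift) borel (shift ^^ k)"
    by (rule distr_distr[OF meas(2,1), symmetric])
  finally show ?case by (simp only: invariant_measuresD(2)[OF assms] Suc)
qed

lemma measure_funpow_shift_vimage:
  assumes "\<rho> \<in> invariant_measures" "A \<in> sets borel"
  shows "measure \<rho> ((shift ^^ k) -` A) = measure \<rho> A"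
proof -
  have "measure \<rho> ((shift ^^ k) -` A) = measure (distr \<rho> borel (shift ^^ k)) A"
    using assms borel_probD(2,3)[OF invariant_measuresD(1)[OF assms(1)]]
    by (subst measure_distr) (auto cong: measurable_cong_sets)
  then show ?thesis by (simp add: distr_funpow_shift_invariant[OF assms(1)])
qed

lemma integral_funpow_shift:
  fixes f :: "(nat \<Rightarrow> 'a::topological_space) \<Rightarrow> real"
  assumes "\<rho> \<in> invariant_measures" "f \<in> borel_measurable borel"
  shows "integral\<^sup>L \<rho> (\<lambda>x. f ((shift ^^ k) x)) = integral\<^sup>L \<rho> f"
proof -
  have "integral\<^sup>L \<rho> (\<lambda>x. f ((shift ^^ k) x)) = integral\<^sup>L (distr \<rho> borel (shift ^^ k)) f"
    using assms borel_probD(2)[OF invariant_measuresD(1)[OF assms(1)]]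
    by (subst integral_distr) (auto cong: measurable_cong_sets)
  then show ?thesis by (simp add: distr_funpow_shift_invariant[OF assms(1)])
qed

subsection \<open>Entropy\<close>

lemma gibbs_inequality:
  fixes p q :: "'b \<Rightarrow> real"
  assumes "finite S" "\<And>s. s \<in> S \<Longrightarrow> 0 \<le> p s" "sum p S = 1"
    "\<And>s. s \<in> S \<Longrightarrow> 0 \<le> q s" "sum q S \<le> 1" "\<And>s. s \<in> S \<Longrightarrow> p s > 0 \<Longrightarrow> q s > 0"
  shows "- (\<Sum>s\<in>S. p s * ln (p s)) \<le> - (\<Sum>s\<in>S. p s * ln (q s))"
proof -
  have "p s * ln (q s) - p s * ln (p s) \<le> q s - p s" if s: "s \<in> S" for s
  proof (cases "p s = 0")
    case False
    then have ps: "p s > 0" using assms(2)[OF s] by simp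
    then have qs: "q s > 0" using assms(6)[OF s] by simp
    have "p s * ln (q s / p s) \<le> p s * (q s / p s - 1)"
      using ps qs by (intro mult_left_mono ln_le_minus_one) auto
    also have "p s * (q s / p s - 1) = q s - p s" using ps by (simp add: field_simps)
    also have "ln (q s / p s) = ln (q s) - ln (p s)" using ps qs by (simp add: ln_div)
    finally show ?thesis by (simp add: algebra_simps)
  qed (use assms(4)[OF s] in simp)
  then have "(\<Sum>s\<in>S. p s * ln (q s) - p s * ln (p s)) \<le> (\<Sum>s\<in>S. q s - p s)"
    by (rule sum_mono)
  then show ?thesis using assms(3,5) by (simp add: sum_subtractf)
qed

lemma entropy_pair_le:
  fixes P :: "'b \<Rightarrow> 'c \<Rightarrow> real"
  assumes "finite S" "finite T" "\<And>u v. u \<in> S \<Longrightarrow> v \<in> T \<Longrightarrow> 0 \<le> P u v"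
    and "(\<Sum>u\<in>S. \<Sum>v\<in>T. P u v) = 1"
  defines "q \<equiv> \<lambda>u. \<Sum>v\<in>T. P u v" and "r \<equiv> \<lambda>v. \<Sum>u\<in>S. P u v"
  shows "- (\<Sum>u\<in>S. \<Sum>v\<in>T. P u v * ln (P u v))
    \<le> - (\<Sum>u\<in>S. q u * ln (q u)) - (\<Sum>v\<in>T. r v * ln (r v))"
proof -
  have q_ge: "P u v \<le> q u" and r_ge: "P u v \<le> r v" if "u \<in> S" "v \<in> T" for u v
    unfolding q_def r_def using that assms(1-3) by (auto intro!: member_le_sum)
  have nonneg: "0 \<le> q u" "0 \<le> r v" if "u \<in> S" "v \<in> T" for u v
    using that assms(3) by (auto simp: q_def r_def intro!: sum_nonneg)
  have pos: "0 < q u" "0 < r v" if "u \<in> S" "v \<in> T" "P u v \<noteq> 0" for u v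
  proof -
    have "0 < P u v" using assms(3)[OF that(1,2)] that(3) by simp
    then show "0 < q u" "0 < r v" using q_ge[OF that(1,2)] r_ge[OF that(1,2)] by linarith+
  qed
  have sum_q: "sum q S = 1" and sum_r: "sum r T = 1"
    using assms(4) by (simp_all add: q_def r_def sum.swap[of _ S])
  define p where "p = (\<lambda>(u, v). P u v)"
  define pq where "pq = (\<lambda>(u, v). q u * r v)"
  have "- (\<Sum>s\<in>S \<times> T. p s * ln (p s)) \<le> - (\<Sum>s\<in>S \<times> T. p s * ln (pq s))"
  proof (rule gibbs_inequality)
    show "sum p (S \<times> T) = 1" using assms(4) by (simp add: p_def sum.cartesian_product)
    show "sum pq (S \<times> T) \<le> 1"
      using sum_q sum_r by (simp add: pq_def sum.cartesian_product[symmetric] sum_product[symmetric])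
  qed (use assms(1-3) nonneg pos in \<open>auto simp: p_def pq_def\<close>)
  also have "(\<Sum>s\<in>S \<times> T. p s * ln (pq s)) = (\<Sum>(u, v)\<in>S \<times> T. P u v * ln (q u * r v))"
    by (intro sum.cong) (auto simp: p_def pq_def)
  also have "\<dots> = (\<Sum>u\<in>S. \<Sum>v\<in>T. P u v * ln (q u) + P u v * ln (r v))"
    unfolding sum.cartesian_product[symmetric]
    using pos by (intro sum.cong refl) (fastforce simp: ln_mult distrib_left)
  also have "\<dots> = (\<Sum>u\<in>S. \<Sum>v\<in>T. P u v * ln (q u)) + (\<Sum>v\<in>T. \<Sum>u\<in>S. P u v * ln (r v))"
    by (simp add: sum.distrib) (rule sum.swap)
  also have "\<dots> = (\<Sum>u\<in>S. q u * ln (q u)) + (\<Sum>v\<in>T. r v * ln (r v))"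
    by (simp add: q_def r_def sum_distrib_right)
  finally show ?thesis
    unfolding sum.cartesian_product by (simp add: p_def split_def)
qed

lemma sum_words_add:
  "(\<Sum>w\<in>words (a + b). f w) = (\<Sum>u\<in>words a. \<Sum>v\<in>words b. f (u @ v))"
proof -
  have "bij_betw (\<lambda>(u, v). u @ v) (words a \<times> words b) (words (a + b))"
    by (rule bij_betwI[where g = "\<lambda>w. (take a w, drop a w)"]) auto
  then have "(\<Sum>w\<in>words (a + b). f w) = (\<Sum>x\<in>words a \<times> words b. f ((\<lambda>(u, v). u @ v) x))"
    by (rule sum.reindex_bij_betw[symmetric])
  then show ?thesis by (simp add: sum.cartesian_product split_def)
qed

lemma x_ln_x_nonpos:
  fixes x :: real
  assumes "0 \<le> x" "x \<le> 1"
  shows "x * ln x \<le> 0"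
proof (cases "x = 0")
  case False
  with assms have "ln x \<le> 0" by simp
  with assms show ?thesis by (simp add: mult_nonneg_nonpos)
qed simp

lemma block_entropy_nonneg:
  fixes \<rho> :: "(nat \<Rightarrow> 'a::{finite,discrete_topology}) measure"
  assumes "borel_prob \<rho>"
  shows "0 \<le> block_entropy \<rho> n"
proof -
  interpret prob_space \<rho> using borel_probD[OF assms] by simp
  have "0 \<le> - (measure \<rho> (cylinder w) * ln (measure \<rho> (cylinder w)))" for w
    using x_ln_x_nonpos[OF measure_nonneg prob_le_1] by simp
  then show ?thesis by (simp add: block_entropy_def sum_negf[symmetric] sum_nonneg)
qed

lemma block_entropy_le:
  fixes \<rho> :: "(nat \<Rightarrow> 'a::{finite,discrete_topology}) measure"
  assumes "borel_prob \<rho>"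
  shows "block_entropy \<rho> n \<le> real n * ln CARD('a)"
proof -
  interpret prob_space \<rho> using borel_probD[OF assms] by simp
  define N where "N = real (card (words n :: 'a list set))"
  have "N > 0" using words_nonempty[of n] by (simp add: N_def card_gt_0_iff)
  have "block_entropy \<rho> n \<le> - (\<Sum>w\<in>words n. measure \<rho> (cylinder w) * ln (1 / N))"
    unfolding block_entropy_def
    by (rule gibbs_inequality) (use sum_measure_cylinders[OF assms, of n] \<open>N > 0\<close> in \<open>auto simp: N_def\<close>)
  also have "\<dots> = - ((\<Sum>w\<in>words n. measure \<rho> (cylinder w)) * ln (1 / N))"
    by (simp only: sum_distrib_right)
  also have "\<dots> = ln N"
    using sum_measure_cylinders[OF assms, of n] \<open>N > 0\<close> by (simp add: ln_div)
  also have "\<dots> = real n * ln CARD('a)"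
    by (simp add: N_def card_words ln_realpow)
  finally show ?thesis .
qed

lemma block_entropy_subadditive:
  fixes \<rho> :: "(nat \<Rightarrow> 'a::{finite,discrete_topology}) measure"
  assumes inv: "\<rho> \<in> invariant_measures"
  shows "block_entropy \<rho> (a + b) \<le> block_entropy \<rho> a + block_entropy \<rho> b"
proof -
  have bp: "borel_prob \<rho>" by (rule invariant_measuresD(1)[OF inv])
  interpret prob_space \<rho> using borel_probD[OF bp] by simp
  define P where "P u v = measure \<rho> (cylinder (u @ v))" for u v :: "'a list"
  have P_eq: "P u v = measure \<rho> (cylinder u \<inter> (shift ^^ a) -` cylinder v)" if "length u = a" for u v
    using that by (simp add: P_def cylinder_append)
  have "(\<Sum>v\<in>words b. P u v) = measure \<rho> (cylinder u)" if "length u = a" for u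
  proof -
    have "disjoint_family_on (\<lambda>v. (shift ^^ a) -` cylinder v) (words b)"
      using disjoint_family_on_cylinder[of b] by (auto simp: disjoint_family_on_def)
    moreover have "(\<Union>v\<in>words b. (shift ^^ a) -` cylinder v) = UNIV"
      by (simp add: vimage_UN[symmetric] UN_words_cylinder)
    ultimately have "(\<Sum>v\<in>words b. measure \<rho> (cylinder u \<inter> (shift ^^ a) -` cylinder v))
        = measure \<rho> (cylinder u)"
      using borel_probD[OF bp] by (intro sum_measure_Int_partition) (auto simp: sets_vimage_funpow_shift)
    then show ?thesis using that by (simp add: P_eq)
  qed
  moreover have "(\<Sum>u\<in>words a. P u v) = measure \<rho> (cylinder v)" for v
  proof -
    have "(\<Sum>u\<in>words a. P u v) = (\<Sum>u\<in>words a. measure \<rho> ((shift ^^ a) -` cylinder v \<inter> cylinder u))"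
      by (intro sum.cong refl) (simp add: P_eq Int_commute)
    also have "\<dots> = measure \<rho> ((shift ^^ a) -` cylinder v)"
      by (rule sum_measure_Int_cylinders[OF bp]) (simp add: sets_vimage_funpow_shift)
    also have "\<dots> = measure \<rho> (cylinder v)"
      by (rule measure_funpow_shift_vimage[OF inv]) simp
    finally show ?thesis .
  qed
  moreover have "(\<Sum>u\<in>words a. \<Sum>v\<in>words b. P u v) = 1"
    using sum_measure_cylinders[OF bp, of "a + b"] by (simp add: sum_words_add P_def)
  ultimately show ?thesis
    using entropy_pair_le[of "words a" "words b" P] by (simp add: block_entropy_def sum_words_add P_def)
qed

lemma subadditive_quotient_le:
  fixes a :: "nat \<Rightarrow> real"
  assumes sub: "\<And>m n. a (m + n) \<le> a m + a n"
    and nonneg: "\<And>n. 0 \<le> a n" and bnd: "\<And>n. a n \<le> real n * c"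
    and "m > 0" "n > 0"
  shows "a n / real n \<le> a m / real m + real m * c / real n"
proof -
  have "a (q * m + r) \<le> real q * a m + a r" for q r
    by (induction q) (auto simp: algebra_simps intro: order_trans[OF sub[of m]])
  then have "a n \<le> real (n div m) * a m + a (n mod m)"
    by (metis div_mult_mod_eq)
  also have "real (n div m) * a m \<le> real n / real m * a m"
    using nonneg[of m] of_nat_div_le_of_nat by (intro mult_right_mono) auto
  also have "a (n mod m) \<le> real m * c"
  proof -
    have "0 \<le> c" using bnd[of 1] nonneg[of 1] by simp
    moreover have "n mod m \<le> m" using \<open>m > 0\<close> by (simp add: less_imp_le)
    ultimately show ?thesis
      using bnd[of "n mod m"] by (meson mult_right_mono of_nat_le_iff order_trans)
  qed
  finally show ?thesis
    using \<open>n > 0\<close> by (simp add: field_simps)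
qed

lemma fekete_subadditive:
  fixes a :: "nat \<Rightarrow> real"
  assumes sub: "\<And>m n. a (m + n) \<le> a m + a n"
    and nonneg: "\<And>n. 0 \<le> a n" and bnd: "\<And>n. a n \<le> real n * c"
  defines "L \<equiv> Inf ((\<lambda>m. a m / real m) ` {0<..})"
  shows "(\<lambda>n. a n / real n) \<longlonglongrightarrow> L" and "\<And>m. m > 0 \<Longrightarrow> L \<le> a m / real m"
proof -
  have bdd: "bdd_below ((\<lambda>m. a m / real m) ` {0<..})"
    using nonneg by (intro bdd_belowI[of _ 0]) auto
  show low: "L \<le> a m / real m" if "m > 0" for m
    unfolding L_def using that by (intro cInf_lower[OF _ bdd]) auto
  show "(\<lambda>n. a n / real n) \<longlonglongrightarrow> L"
  proof (rule LIMSEQ_I)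
    fix r :: real assume "r > 0"
    then have "Inf ((\<lambda>m. a m / real m) ` {0<..}) < L + r / 2" by (simp add: L_def)
    then obtain m where m: "m > 0" "a m / real m < L + r / 2"
      by (subst (asm) cInf_less_iff[OF _ bdd]) auto
    have c: "0 \<le> c" using bnd[of 1] nonneg[of 1] by simp
    obtain N where N: "real m * c / (r / 2) < real N" using reals_Archimedean2 by blast
    have "norm (a n / real n - L) < r" if "n \<ge> Suc N" for n
    proof -
      have "real m * c / real n \<le> real m * c / real (Suc N)"
        using that c by (intro divide_left_mono) auto
      also have "\<dots> < r / 2"
      proof -
        have "real m * c < real N * (r / 2)" using N \<open>r > 0\<close> by (simp add: pos_divide_less_eq)
        also have "\<dots> \<le> real (Suc N) * (r / 2)" using \<open>r > 0\<close> by simp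
        finally show ?thesis by (simp add: pos_divide_less_eq mult.commute)
      qed
      finally have "a n / real n < L + r"
        using subadditive_quotient_le[OF sub nonneg bnd m(1), of n] m(2) that by linarith
      moreover have "L \<le> a n / real n" using low that by simp
      ultimately show ?thesis by simp
    qed
    then show "\<exists>N. \<forall>n\<ge>N. norm (a n / real n - L) < r" by blast
  qed
qed

lemma
  fixes \<rho> :: "(nat \<Rightarrow> 'a::{finite,discrete_topology}) measure"
  assumes "\<rho> \<in> invariant_measures"
  shows ks_entropy_tendsto: "(\<lambda>n. block_entropy \<rho> n / real n) \<longlonglongrightarrow> ks_entropy \<rho>"
    and ks_entropy_le_block_entropy: "m > 0 \<Longrightarrow> ks_entropy \<rho> \<le> block_entropy \<rho> m / real m"
proof -
  have bp: "borel_prob \<rho>" by (rule invariant_measuresD(1)[OF assms])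
  note fekete = fekete_subadditive[OF block_entropy_subadditive[OF assms]
      block_entropy_nonneg[OF bp] block_entropy_le[OF bp]]
  have "ks_entropy \<rho> = Inf ((\<lambda>m. block_entropy \<rho> m / real m) ` {0<..})"
    unfolding ks_entropy_def using fekete(1) by (rule limI)
  with fekete show "(\<lambda>n. block_entropy \<rho> n / real n) \<longlonglongrightarrow> ks_entropy \<rho>"
    and "m > 0 \<Longrightarrow> ks_entropy \<rho> \<le> block_entropy \<rho> m / real m" by simp_all
qed

lemma block_entropy_quotient_le:
  fixes \<rho> :: "(nat \<Rightarrow> 'a::{finite,discrete_topology}) measure"
  assumes "\<rho> \<in> invariant_measures" "m > 0" "n > 0"
  shows "block_entropy \<rho> n / real n \<le> block_entropy \<rho> m / real m + real m * ln CARD('a) / real n"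
  using invariant_measuresD(1)[OF assms(1)] assms(2,3)
  by (intro subadditive_quotient_le block_entropy_subadditive[OF assms(1)]
      block_entropy_nonneg block_entropy_le)

subsection \<open>The periodic Gibbs measures\<close>

definition gibbs_weight :: "((nat \<Rightarrow> 'a) \<Rightarrow> real) \<Rightarrow> nat \<Rightarrow> 'a list \<Rightarrow> real" where
  "gibbs_weight \<phi> n w = exp (U_word \<phi> w) / partition_fn \<phi> n"

lemma partition_fn_pos: "partition_fn (\<phi> :: (nat \<Rightarrow> 'a::finite) \<Rightarrow> real) n > 0"
  unfolding partition_fn_def using words_nonempty[of n] by (intro sum_pos) auto

lemma gibbs_weight_pos: "gibbs_weight (\<phi> :: (nat \<Rightarrow> 'a::finite) \<Rightarrow> real) n w > 0"
  using partition_fn_pos[of \<phi> n] by (simp add: gibbs_weight_def)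

lemma sum_gibbs_weight: "(\<Sum>w\<in>words n. gibbs_weight (\<phi> :: (nat \<Rightarrow> 'a::finite) \<Rightarrow> real) n w) = 1"
  using partition_fn_pos[of \<phi> n]
  by (simp add: gibbs_weight_def sum_divide_distrib[symmetric] partition_fn_def)

lemma ln_gibbs_weight: "ln (gibbs_weight (\<phi> :: (nat \<Rightarrow> 'a::finite) \<Rightarrow> real) n w) = U_word \<phi> w - ln (partition_fn \<phi> n)"
  using partition_fn_pos[of \<phi> n] by (simp add: gibbs_weight_def ln_div)

lemma emeasure_distr_periodic_pt:
  fixes p :: "'a::{finite,topological_space} list \<Rightarrow> real"
  assumes "B \<in> sets borel" "\<And>w. 0 \<le> p w"
  shows "emeasure (distr (point_measure (words n) (\<lambda>w. ennreal (p w))) borel periodic_pt) B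
    = ennreal (\<Sum>w\<in>{w\<in>words n. periodic_pt w \<in> B}. p w)"
proof -
  have "emeasure (distr (point_measure (words n) (\<lambda>w. ennreal (p w))) borel periodic_pt) B
      = emeasure (point_measure (words n) (\<lambda>w. ennreal (p w))) {w\<in>words n. periodic_pt w \<in> B}"
    using assms(1) by (subst emeasure_distr) (auto simp: space_point_measure vimage_def Int_def conj_commute)
  also have "\<dots> = ennreal (\<Sum>w\<in>{w\<in>words n. periodic_pt w \<in> B}. p w)"
    using assms(2) by (subst emeasure_point_measure_finite) (auto intro!: sum_ennreal)
  finally show ?thesis .
qed

lemma mu_n_eq_distr:
  fixes \<phi> :: "(nat \<Rightarrow> 'a::{finite,topological_space}) \<Rightarrow> real"
  shows "mu_n \<phi> n = distr (point_measure (words n) (\<lambda>w. ennreal (gibbs_weight \<phi> n w))) borel periodic_pt"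
    (is "_ = ?M")
proof -
  have "measure_of UNIV (sets borel) (emeasure ?M) = mu_n \<phi> n"
    unfolding mu_n_def
  proof (rule measure_of_eq)
    fix B :: "(nat \<Rightarrow> 'a) set" assume "B \<in> sigma_sets UNIV (sets borel)"
    then have "B \<in> sets borel" using sets.sigma_sets_subset[of "sets borel" borel] by auto
    then show "emeasure ?M B = ennreal (\<Sum>w\<in>{w\<in>words n. periodic_pt w \<in> B}. exp (U_word \<phi> w) / partition_fn \<phi> n)"
      using gibbs_weight_pos[of \<phi> n] by (simp add: emeasure_distr_periodic_pt less_imp_le gibbs_weight_def)
  qed simp
  then show ?thesis
    using measure_of_of_measure[of ?M] by simp
qed

lemma emeasure_mu_n:
  fixes \<phi> :: "(nat \<Rightarrow> 'a::{finite,topological_space}) \<Rightarrow> real"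
  assumes "B \<in> sets borel"
  shows "emeasure (mu_n \<phi> n) B = ennreal (\<Sum>w\<in>{w\<in>words n. periodic_pt w \<in> B}. gibbs_weight \<phi> n w)"
  using assms gibbs_weight_pos[of \<phi> n]
  by (simp add: mu_n_eq_distr emeasure_distr_periodic_pt less_imp_le)

lemma borel_prob_mu_n: "borel_prob (mu_n (\<phi> :: (nat \<Rightarrow> 'a::{finite,topological_space}) \<Rightarrow> real) n)"
  unfolding borel_prob_def
proof
  have "{w\<in>words n. periodic_pt w \<in> UNIV} = words n" by auto
  then have "emeasure (mu_n \<phi> n) UNIV = 1"
    using emeasure_mu_n[of UNIV \<phi> n] by (simp add: sum_gibbs_weight del: mem_words_iff)
  then show "prob_space (mu_n \<phi> n)"
    by (intro prob_spaceI) (simp add: mu_n_eq_distr)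
qed (simp add: mu_n_eq_distr)

lemma integral_mu_n:
  fixes \<phi> :: "(nat \<Rightarrow> 'a::{finite,topological_space}) \<Rightarrow> real"
  assumes "f \<in> borel_measurable borel"
  shows "integral\<^sup>L (mu_n \<phi> n) f = (\<Sum>w\<in>words n. gibbs_weight \<phi> n w * f (periodic_pt w))"
proof -
  have "integral\<^sup>L (mu_n \<phi> n) f
      = integral\<^sup>L (point_measure (words n) (\<lambda>w. ennreal (gibbs_weight \<phi> n w))) (\<lambda>w. f (periodic_pt w))"
    unfolding mu_n_eq_distr by (rule integral_distr) (auto simp: assms space_point_measure)
  also have "\<dots> = (\<Sum>w\<in>words n. gibbs_weight \<phi> n w *\<^sub>R f (periodic_pt w))"
    using gibbs_weight_pos[of \<phi> n] by (intro lebesgue_integral_point_measure_finite) (auto intro: less_imp_le)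
  finally show ?thesis by simp
qed

lemma measure_mu_n_cylinder:
  fixes \<phi> :: "(nat \<Rightarrow> 'a::{finite,discrete_topology}) \<Rightarrow> real"
  assumes "length v = n"
  shows "measure (mu_n \<phi> n) (cylinder v) = gibbs_weight \<phi> n v"
proof -
  have "w = v" if "length w = n" "periodic_pt w \<in> cylinder v" for w
    using that assms by (intro nth_equalityI) (auto simp: cylinder_def periodic_pt_def)
  then have "{w\<in>words n. periodic_pt w \<in> cylinder v} = {v}"
    using assms by (auto simp: cylinder_def periodic_pt_def)
  then show ?thesis
    using gibbs_weight_pos[of \<phi> n v] by (simp add: measure_def emeasure_mu_n less_imp_le)
qed

lemma sum_words_rotate1: "(\<Sum>w\<in>words n. g (rotate1 w)) = (\<Sum>w\<in>words n. g w)"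
proof -
  have "words n \<subseteq> rotate1 ` words n"
  proof
    fix w assume "w \<in> words n"
    moreover obtain v where "w = rotate1 v" using surj_rotate1 by (metis surjD)
    ultimately show "w \<in> rotate1 ` words n" by auto
  qed
  then have "rotate1 ` words n = words n" by auto
  moreover have "inj_on rotate1 (words n)" using inj_rotate1 by (rule inj_on_subset) simp
  ultimately show ?thesis by (metis sum.reindex_cong)
qed

lemma sum_words_rotate: "(\<Sum>w\<in>words n. g (rotate k w)) = (\<Sum>w\<in>words n. g w)"
proof (induction k arbitrary: g)
  case (Suc k)
  have "(\<Sum>w\<in>words n. g (rotate (Suc k) w)) = (\<Sum>w\<in>words n. (\<lambda>v. g (rotate1 v)) (rotate k w))"
    by simp
  also have "\<dots> = (\<Sum>w\<in>words n. g (rotate1 w))" by (rule Suc.IH)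
  also have "\<dots> = (\<Sum>w\<in>words n. g w)" by (rule sum_words_rotate1)
  finally show ?case .
qed simp

lemma U_word_rotate1: "U_word \<phi> (rotate1 w) = U_word \<phi> w"
proof -
  define g where "g i = phi_word \<phi> (rotate i w)" for i
  have "rotate i (rotate1 w) = rotate (Suc i) w" for i
    by (simp add: rotate1_rotate_swap)
  then have "U_word \<phi> (rotate1 w) = (\<Sum>i<length w. g (Suc i))"
    by (simp add: U_word_def g_def del: rotate_Suc)
  also have "\<dots> = (\<Sum>i<length w. g i)"
    using sum.lessThan_Suc_shift[of g "length w"] by (simp add: g_def)
  finally show ?thesis by (simp add: U_word_def g_def)
qed

lemma U_word_rotate: "U_word \<phi> (rotate k w) = U_word \<phi> w"
  by (induction k) (simp_all add: U_word_rotate1)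

lemma gibbs_weight_rotate: "gibbs_weight \<phi> n (rotate k w) = gibbs_weight \<phi> n w"
  by (simp add: gibbs_weight_def U_word_rotate)

lemma mu_n_invariant:
  fixes \<phi> :: "(nat \<Rightarrow> 'a::{finite,topological_space}) \<Rightarrow> real"
  assumes "n > 0"
  shows "mu_n \<phi> n \<in> invariant_measures"
proof -
  have shift_periodic_pt: "shift (periodic_pt w) = periodic_pt (rotate1 w)" if "length w = n" for w :: "'a list"
    using periodic_pt_rotate[of w 1] that assms by auto
  have "emeasure (distr (mu_n \<phi> n) borel shift) A = emeasure (mu_n \<phi> n) A" if A: "A \<in> sets borel" for A
  proof -
    have "emeasure (distr (mu_n \<phi> n) borel shift) A = emeasure (mu_n \<phi> n) (shift -` A)"
      using A by (subst emeasure_distr) (auto simp: mu_n_eq_distr)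
    also have "\<dots> = ennreal (\<Sum>w\<in>words n. if periodic_pt (rotate1 w) \<in> A then gibbs_weight \<phi> n (rotate1 w) else 0)"
    proof -
      have "(\<Sum>w\<in>{w\<in>words n. periodic_pt w \<in> shift -` A}. gibbs_weight \<phi> n w)
          = (\<Sum>w\<in>words n. if periodic_pt (rotate1 w) \<in> A then gibbs_weight \<phi> n (rotate1 w) else 0)"
      proof -
        have "{w\<in>words n. periodic_pt w \<in> shift -` A} = {w\<in>words n. periodic_pt (rotate1 w) \<in> A}"
          using shift_periodic_pt by auto
        then show ?thesis
          using gibbs_weight_rotate[of \<phi> n 1]
          by (simp add: sum.inter_filter del: mem_words_iff cong: if_cong)
      qed
      then show ?thesis
        using A by (simp add: emeasure_mu_n measurable_sets_borel[OF borel_measurable_shift] del: mem_words_iff)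
    qed
    also have "\<dots> = emeasure (mu_n \<phi> n) A"
      using A by (simp add: sum_words_rotate1[where g = "\<lambda>w. if periodic_pt w \<in> A then gibbs_weight \<phi> n w else 0"]
          emeasure_mu_n sum.inter_filter del: mem_words_iff)
    finally show ?thesis .
  qed
  then have "distr (mu_n \<phi> n) borel shift = mu_n \<phi> n"
    by (intro measure_eqI) (simp_all add: mu_n_eq_distr)
  then show ?thesis
    using borel_prob_mu_n by (simp add: invariant_measures_def)
qed

lemma sum_gibbs_weight_U_word:
  fixes \<phi> :: "(nat \<Rightarrow> 'a::{finite,topological_space}) \<Rightarrow> real"
  assumes "\<phi> \<in> borel_measurable borel"
  shows "(\<Sum>w\<in>words n. gibbs_weight \<phi> n w * U_word \<phi> w) = real n * integral\<^sup>L (mu_n \<phi> n) \<phi>"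
proof -
  have "(\<Sum>w\<in>words n. gibbs_weight \<phi> n w * U_word \<phi> w)
      = (\<Sum>i<n. \<Sum>w\<in>words n. gibbs_weight \<phi> n (rotate i w) * \<phi> (periodic_pt (rotate i w)))"
    by (simp add: U_word_def phi_word_def sum_distrib_left gibbs_weight_rotate sum.swap[of _ "{..<n}"])
  also have "\<dots> = (\<Sum>i<n. \<Sum>w\<in>words n. gibbs_weight \<phi> n w * \<phi> (periodic_pt w))"
    by (intro sum.cong refl sum_words_rotate)
  also have "\<dots> = real n * integral\<^sup>L (mu_n \<phi> n) \<phi>"
    by (simp add: integral_mu_n[OF assms])
  finally show ?thesis .
qed

lemma block_entropy_add_energy_le:
  fixes \<phi> :: "(nat \<Rightarrow> 'a::{finite,discrete_topology}) \<Rightarrow> real"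
  assumes "borel_prob \<nu>"
  shows "block_entropy \<nu> n + (\<Sum>w\<in>words n. measure \<nu> (cylinder w) * U_word \<phi> w)
    \<le> ln (partition_fn \<phi> n)"
proof -
  have "block_entropy \<nu> n \<le> - (\<Sum>w\<in>words n. measure \<nu> (cylinder w) * ln (gibbs_weight \<phi> n w))"
    unfolding block_entropy_def
    using sum_measure_cylinders[OF assms] borel_probD(1)[OF assms] gibbs_weight_pos[of \<phi> n]
    by (intro gibbs_inequality) (auto simp: sum_gibbs_weight less_imp_le measure_nonneg)
  then show ?thesis
    using sum_measure_cylinders[OF assms, of n]
    by (simp add: ln_gibbs_weight right_diff_distrib sum_subtractf sum_distrib_right[symmetric])
qed

lemma block_entropy_mu_n:
  fixes \<phi> :: "(nat \<Rightarrow> 'a::{finite,discrete_topology}) \<Rightarrow> real"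
  shows "block_entropy (mu_n \<phi> n) n + (\<Sum>w\<in>words n. gibbs_weight \<phi> n w * U_word \<phi> w)
    = ln (partition_fn \<phi> n)"
proof -
  have "block_entropy (mu_n \<phi> n) n = - (\<Sum>w\<in>words n. gibbs_weight \<phi> n w * ln (gibbs_weight \<phi> n w))"
    unfolding block_entropy_def by (intro arg_cong[where f = uminus] sum.cong refl) (simp add: measure_mu_n_cylinder)
  also have "\<dots> = - (\<Sum>w\<in>words n. gibbs_weight \<phi> n w * U_word \<phi> w)
      + (\<Sum>w\<in>words n. gibbs_weight \<phi> n w) * ln (partition_fn \<phi> n)"
    by (simp add: ln_gibbs_weight right_diff_distrib sum_subtractf sum_distrib_right)
  finally show ?thesis by (simp add: sum_gibbs_weight)
qed

text \<open>Only the last k terms of the periodic energy, whose windows wrap around the end of the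
  block, escape the variation bound.\<close>

lemma birkhoff_sum_le_U_word:
  fixes \<phi> :: "(nat \<Rightarrow> 'a) \<Rightarrow> real"
  assumes B: "\<And>x. \<bar>\<phi> x\<bar> \<le> B"
    and k: "\<And>x y. (\<forall>i<k. x i = y i) \<Longrightarrow> \<bar>\<phi> x - \<phi> y\<bar> < e"
  shows "(\<Sum>i<n. \<phi> ((shift ^^ i) x)) - (real n * e + 2 * B * real k) \<le> U_word \<phi> (initial_word n x)"
proof -
  define w where "w = initial_word n x"
  have term_le: "\<phi> ((shift ^^ i) x) - e - 2 * B * of_bool (n < i + k) \<le> \<phi> (periodic_pt (rotate i w))"
    if "i < n" for i
  proof (cases "n < i + k")
    case True
    then show ?thesis
      using B[of "(shift ^^ i) x"] B[of "periodic_pt (rotate i w)"] k[of x x] by (simp add: abs_le_iff)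
  next
    case False
    have "periodic_pt (rotate i w) j = (shift ^^ i) x j" if "j < k" for j
      using periodic_pt_rotate[of w i] \<open>i < n\<close> False that
      by (simp add: w_def funpow_shift periodic_pt_def initial_word_def)
    then have "\<bar>\<phi> (periodic_pt (rotate i w)) - \<phi> ((shift ^^ i) x)\<bar> < e" by (intro k) simp
    then show ?thesis using False by (simp add: abs_less_iff)
  qed
  have "card ({..<n} \<inter> {i. n < i + k}) \<le> k"
    using card_mono[of "{n - k..<n}" "{..<n} \<inter> {i. n < i + k}"] by force
  then have "(\<Sum>i<n. 2 * B * of_bool (n < i + k)) \<le> 2 * B * real k"
    using B[of x] by (simp add: sum_distrib_left[symmetric] Int_def mult_left_mono)
  moreover have "(\<Sum>i<n. \<phi> ((shift ^^ i) x) - e - 2 * B * of_bool (n < i + k)) \<le> U_word \<phi> w"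
    unfolding U_word_def phi_word_def w_def length_initial_word
    by (rule sum_mono) (use term_le in \<open>simp add: w_def\<close>)
  ultimately show ?thesis by (simp add: w_def sum_subtractf)
qed

lemma energy_ge_birkhoff_integral:
  fixes \<phi> :: "(nat \<Rightarrow> 'a::{finite,discrete_topology}) \<Rightarrow> real"
  assumes inv: "\<nu> \<in> invariant_measures" and cont: "continuous_on UNIV \<phi>"
    and B: "\<And>x. \<bar>\<phi> x\<bar> \<le> B"
    and k: "\<And>x y. (\<forall>i<k. x i = y i) \<Longrightarrow> \<bar>\<phi> x - \<phi> y\<bar> < e"
  shows "real n * integral\<^sup>L \<nu> \<phi> - (real n * e + 2 * B * real k)
    \<le> (\<Sum>w\<in>words n. measure \<nu> (cylinder w) * U_word \<phi> w)"
proof -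
  have bp: "borel_prob \<nu>" by (rule invariant_measuresD(1)[OF inv])
  interpret prob_space \<nu> using borel_probD[OF bp] by simp
  have int: "integrable \<nu> (\<lambda>x. \<phi> ((shift ^^ i) x))" for i
    using continuous_on_compose[OF continuous_on_funpow_shift continuous_on_subset[OF cont]]
    by (intro integrable_continuous_fullshift[OF bp]) (simp add: comp_def)
  have "real n * integral\<^sup>L \<nu> \<phi> - (real n * e + 2 * B * real k)
      = integral\<^sup>L \<nu> (\<lambda>x. (\<Sum>i<n. \<phi> ((shift ^^ i) x)) - (real n * e + 2 * B * real k))"
    using int borel_measurable_continuous_onI[OF cont]
    by (simp add: Bochner_Integration.integral_sum integral_funpow_shift[OF inv] prob_space)
  also have "\<dots> \<le> integral\<^sup>L \<nu> (\<lambda>x. U_word \<phi> (initial_word n x))"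
    using int birkhoff_sum_le_U_word[OF B k] integrable_initial_word[OF bp]
    by (intro integral_mono) auto
  also have "\<dots> = (\<Sum>w\<in>words n. measure \<nu> (cylinder w) * U_word \<phi> w)"
    by (simp add: integral_initial_word[OF bp] mult.commute)
  finally show ?thesis .
qed

subsection \<open>Weak limits\<close>

lemma x_ln_x_abs_le:
  fixes y :: real
  assumes "0 \<le> y" "y \<le> 1"
  shows "\<bar>y * ln y\<bar> \<le> 2 * sqrt y"
proof (cases "y = 0")
  case False
  define s where "s = sqrt y"
  have s: "s > 0" "y = s * s" using assms False by (simp_all add: s_def)
  have "ln (1 / s) \<le> 1 / s - 1" using s by (intro ln_le_minus_one) simp
  then have "1 - 1 / s \<le> ln s" using s by (simp add: ln_div)
  then have "s * s * (2 * (1 - 1 / s)) \<le> s * s * (2 * ln s)" using s by (intro mult_left_mono) auto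
  moreover have "y * ln y = s * s * (2 * ln s)" using s by (simp add: ln_mult)
  moreover have "s * s * (2 * (1 - 1 / s)) = 2 * (s * s) - 2 * s" using s by (simp add: field_simps)
  moreover have "0 \<le> s * s" by simp
  ultimately have "- 2 * s \<le> y * ln y" by linarith
  then show ?thesis using x_ln_x_nonpos[OF assms] by (simp add: s_def)
qed simp

lemma tendsto_x_ln_x:
  fixes X :: "nat \<Rightarrow> real"
  assumes "X \<longlonglongrightarrow> x" "\<And>k. 0 \<le> X k" "\<And>k. X k \<le> 1"
  shows "(\<lambda>k. X k * ln (X k)) \<longlonglongrightarrow> x * ln x"
proof (cases "x = 0")
  case True
  have "(\<lambda>k. 2 * sqrt (X k)) \<longlonglongrightarrow> 2 * sqrt 0"
    using assms(1) True by (intro tendsto_mult tendsto_const tendsto_real_sqrt) simp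
  then have "(\<lambda>k. 2 * sqrt (X k)) \<longlonglongrightarrow> 0" by simp
  moreover have "\<forall>\<^sub>F k in sequentially. norm (X k * ln (X k)) \<le> 2 * sqrt (X k)"
    using x_ln_x_abs_le[OF assms(2,3)] by (intro always_eventually allI) simp
  ultimately have "(\<lambda>k. X k * ln (X k)) \<longlonglongrightarrow> 0" by (rule Lim_null_comparison[rotated])
  then show ?thesis using True by simp
next
  case False
  then show ?thesis using assms(1) by (intro tendsto_mult tendsto_ln)
qed

lemma weak_conv_measure_clopen:
  fixes M :: "nat \<Rightarrow> (nat \<Rightarrow> 'a::{finite,discrete_topology}) measure"
  assumes "weak_conv M \<mu>" "\<And>j. borel_prob (M j)" "borel_prob \<mu>" "open C" "closed C"
  shows "(\<lambda>j. measure (M j) C) \<longlonglongrightarrow> measure \<mu> C"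
  using assms(1) continuous_on_indicator_clopen[OF assms(4,5)] borel_probD(3)[OF assms(2)]
    borel_probD(3)[OF assms(3)]
  by (auto simp: weak_conv_def)

lemma weak_conv_measure_cylinder:
  fixes M :: "nat \<Rightarrow> (nat \<Rightarrow> 'a::{finite,discrete_topology}) measure"
  assumes "weak_conv M \<mu>" "\<And>j. borel_prob (M j)" "borel_prob \<mu>"
  shows "(\<lambda>j. measure (M j) (cylinder w)) \<longlonglongrightarrow> measure \<mu> (cylinder w)"
    and "(\<lambda>j. measure (M j) (shift -` cylinder w)) \<longlonglongrightarrow> measure \<mu> (shift -` cylinder w)"
  using assms open_cylinder[of w] closed_cylinder[of w]
    open_vimage[OF _ continuous_on_shift] closed_vimage[OF _ continuous_on_shift]
  by (auto intro!: weak_conv_measure_clopen)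

lemma weak_limit_invariant:
  fixes M :: "nat \<Rightarrow> (nat \<Rightarrow> 'a::{finite,discrete_topology}) measure"
  assumes "weak_conv M \<mu>" "\<And>j. M j \<in> invariant_measures" "borel_prob \<mu>"
  shows "\<mu> \<in> invariant_measures"
proof -
  note bp = invariant_measuresD(1)[OF assms(2)]
  interpret prob_space \<mu> using borel_probD[OF assms(3)] by simp
  have "measure \<mu> (shift -` cylinder w) = measure \<mu> (cylinder w)" for w :: "'a list"
  proof (rule LIMSEQ_unique)
    show "(\<lambda>j. measure (M j) (cylinder w)) \<longlonglongrightarrow> measure \<mu> (shift -` cylinder w)"
    proof -
      have "measure (M j) (shift -` cylinder w) = measure (M j) (cylinder w)" for j
        using measure_funpow_shift_vimage[OF assms(2)[of j] borel_cylinder[of w], of 1] by simp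
      then show ?thesis using weak_conv_measure_cylinder(2)[OF assms(1) bp assms(3), where w = w] by simp
    qed
  qed (rule weak_conv_measure_cylinder(1)[OF assms(1) bp assms(3)])
  then have gen: "emeasure (distr \<mu> borel shift) C = emeasure \<mu> C" if "C \<in> insert {} (range cylinder)" for C
    using that borel_probD(2,3)[OF assms(3)]
    by (auto simp: emeasure_distr emeasure_eq_measure cong: measurable_cong_sets)
  have "cylinder [] = UNIV" by (simp add: cylinder_def)
  then have UNIV_cylinder: "UNIV \<in> range (cylinder :: 'a list \<Rightarrow> _)" by (metis rangeI)
  then have fin: "emeasure (distr \<mu> borel shift) UNIV \<noteq> \<infinity>"
    using gen[of UNIV] by (simp add: emeasure_eq_measure)
  have "distr \<mu> borel shift = \<mu>"
    using borel_probD(2,3)[OF assms(3)]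
    by (intro measure_eqI_generator_eq[where \<Omega> = UNIV and E = "insert {} (range cylinder)"
          and A = "\<lambda>_. UNIV", OF Int_stable_cylinders _ gen])
      (use UNIV_cylinder fin in \<open>auto simp: sets_borel_eq_cylinders cong: measurable_cong_sets\<close>)
  with assms(3) show ?thesis by (simp add: invariant_measures_def)
qed

lemma block_entropy_weak_conv:
  fixes M :: "nat \<Rightarrow> (nat \<Rightarrow> 'a::{finite,discrete_topology}) measure"
  assumes "weak_conv M \<mu>" "\<And>j. borel_prob (M j)" "borel_prob \<mu>"
  shows "(\<lambda>j. block_entropy (M j) m) \<longlonglongrightarrow> block_entropy \<mu> m"
  unfolding block_entropy_def
proof (intro tendsto_minus tendsto_sum tendsto_x_ln_x weak_conv_measure_cylinder(1)[OF assms])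
  fix w j
  interpret prob_space "M j" using borel_probD[OF assms(2)] by simp
  show "0 \<le> measure (M j) (cylinder w)" "measure (M j) (cylinder w) \<le> 1" by simp_all
qed

subsection \<open>The variational inequality\<close>

lemma free_energy_le_mu_n:
  fixes \<phi> :: "(nat \<Rightarrow> 'a::{finite,discrete_topology}) \<Rightarrow> real"
  assumes inv: "\<nu> \<in> invariant_measures" and cont: "continuous_on UNIV \<phi>"
    and B: "\<And>x. \<bar>\<phi> x\<bar> \<le> B"
    and k: "\<And>x y. (\<forall>i<k. x i = y i) \<Longrightarrow> \<bar>\<phi> x - \<phi> y\<bar> < e"
    and "n > 0"
  shows "ks_entropy \<nu> + integral\<^sup>L \<nu> \<phi> - e - 2 * B * real k / real n
    \<le> block_entropy (mu_n \<phi> n) n / real n + integral\<^sup>L (mu_n \<phi> n) \<phi>"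
proof -
  have "real n * ks_entropy \<nu> \<le> block_entropy \<nu> n"
    using ks_entropy_le_block_entropy[OF inv \<open>n > 0\<close>] \<open>n > 0\<close> by (simp add: field_simps)
  moreover have "real n * integral\<^sup>L \<nu> \<phi> - (real n * e + 2 * B * real k)
      \<le> (\<Sum>w\<in>words n. measure \<nu> (cylinder w) * U_word \<phi> w)"
    by (rule energy_ge_birkhoff_integral[OF inv cont B k])
  moreover note block_entropy_add_energy_le[OF invariant_measuresD(1)[OF inv], of n \<phi>]
    block_entropy_mu_n[of \<phi> n] sum_gibbs_weight_U_word[OF borel_measurable_continuous_onI[OF cont], of n]
  ultimately have "real n * ks_entropy \<nu> + real n * integral\<^sup>L \<nu> \<phi> - real n * e - 2 * B * real k
      \<le> block_entropy (mu_n \<phi> n) n + real n * integral\<^sup>L (mu_n \<phi> n) \<phi>"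
    by linarith
  then have "(real n * ks_entropy \<nu> + real n * integral\<^sup>L \<nu> \<phi> - real n * e - 2 * B * real k) / real n
      \<le> (block_entropy (mu_n \<phi> n) n + real n * integral\<^sup>L (mu_n \<phi> n) \<phi>) / real n"
    by (rule divide_right_mono) simp
  then show ?thesis
    using \<open>n > 0\<close> by (simp add: diff_divide_distrib add_divide_distrib)
qed

text \<open>Upper semicontinuity of the entropy enters here: subadditivity bounds the entropy of the
  periodic measure at scale n by its entropy at a fixed scale m, uniformly in n, and entropies
  at scale m pass to the weak limit.\<close>

lemma free_energy_le_weak_limit_block:
  fixes \<phi> :: "(nat \<Rightarrow> 'a::{finite,discrete_topology}) \<Rightarrow> real"
  assumes inv: "\<nu> \<in> invariant_measures" and cont: "continuous_on UNIV \<phi>"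
    and B: "\<And>x. \<bar>\<phi> x\<bar> \<le> B"
    and k: "\<And>x y. (\<forall>i<k. x i = y i) \<Longrightarrow> \<bar>\<phi> x - \<phi> y\<bar> < e"
    and conv: "weak_conv (\<lambda>j. mu_n \<phi> (n j)) \<mu>" and "borel_prob \<mu>"
    and n: "\<And>j. n j > 0" "filterlim n at_top sequentially" and "m > 0"
  shows "ks_entropy \<nu> + integral\<^sup>L \<nu> \<phi> - e \<le> block_entropy \<mu> m / real m + integral\<^sup>L \<mu> \<phi>"
proof -
  define c where "c = ln CARD('a)"
  have inv_n: "(\<lambda>j. inverse (real (n j))) \<longlonglongrightarrow> 0"
    by (intro tendsto_inverse_0_at_top filterlim_compose[OF filterlim_real_sequentially n(2)])
  have lower: "(\<lambda>j. ks_entropy \<nu> + integral\<^sup>L \<nu> \<phi> - e - 2 * B * real k * inverse (real (n j)))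
      \<longlonglongrightarrow> ks_entropy \<nu> + integral\<^sup>L \<nu> \<phi> - e - 2 * B * real k * 0"
    by (intro tendsto_intros inv_n)
  have "(\<lambda>j. integral\<^sup>L (mu_n \<phi> (n j)) \<phi>) \<longlonglongrightarrow> integral\<^sup>L \<mu> \<phi>"
    using conv cont by (simp add: weak_conv_def)
  then have upper: "(\<lambda>j. block_entropy (mu_n \<phi> (n j)) m / real m + real m * c * inverse (real (n j))
        + integral\<^sup>L (mu_n \<phi> (n j)) \<phi>)
      \<longlonglongrightarrow> block_entropy \<mu> m / real m + real m * c * 0 + integral\<^sup>L \<mu> \<phi>"
    using block_entropy_weak_conv[OF conv borel_prob_mu_n \<open>borel_prob \<mu>\<close>, of m]
    by (intro tendsto_add tendsto_mult tendsto_divide tendsto_const inv_n) (use \<open>m > 0\<close> in simp_all)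
  have "ks_entropy \<nu> + integral\<^sup>L \<nu> \<phi> - e - 2 * B * real k * inverse (real (n j))
      \<le> block_entropy (mu_n \<phi> (n j)) m / real m + real m * c * inverse (real (n j))
        + integral\<^sup>L (mu_n \<phi> (n j)) \<phi>" for j
    using free_energy_le_mu_n[where k = k, OF inv cont B k n(1)[of j]]
      block_entropy_quotient_le[OF mu_n_invariant[OF n(1)[of j]] \<open>m > 0\<close> n(1)[of j], of \<phi>]
    by (simp add: c_def divide_inverse)
  then have "ks_entropy \<nu> + integral\<^sup>L \<nu> \<phi> - e - 2 * B * real k * 0
      \<le> block_entropy \<mu> m / real m + real m * c * 0 + integral\<^sup>L \<mu> \<phi>"
    by (intro LIMSEQ_le[OF lower upper]) simp
  then show ?thesis by simp
qed

lemma free_energy_le_weak_limit: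
  fixes \<phi> :: "(nat \<Rightarrow> 'a::{finite,discrete_topology}) \<Rightarrow> real"
  assumes inv: "\<nu> \<in> invariant_measures" and cont: "continuous_on UNIV \<phi>"
    and conv: "weak_conv (\<lambda>j. mu_n \<phi> (n j)) \<mu>" and \<mu>: "\<mu> \<in> invariant_measures"
    and n: "\<And>j. n j > 0" "filterlim n at_top sequentially"
  shows "ks_entropy \<nu> + integral\<^sup>L \<nu> \<phi> \<le> ks_entropy \<mu> + integral\<^sup>L \<mu> \<phi>"
proof (rule field_le_epsilon)
  fix e :: real assume "e > 0"
  obtain k where k: "\<And>x y. (\<forall>i<k. x i = y i) \<Longrightarrow> \<bar>\<phi> x - \<phi> y\<bar> < e"
    using continuous_on_fullshift_uniform[OF cont \<open>e > 0\<close>] by blast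
  obtain B where B: "\<And>x. \<bar>\<phi> x\<bar> \<le> B" using continuous_on_fullshift_bounded[OF cont] by blast
  have "ks_entropy \<nu> + integral\<^sup>L \<nu> \<phi> - e \<le> ks_entropy \<mu> + integral\<^sup>L \<mu> \<phi>"
  proof (rule LIMSEQ_le_const)
    show "(\<lambda>m. block_entropy \<mu> m / real m + integral\<^sup>L \<mu> \<phi>) \<longlonglongrightarrow> ks_entropy \<mu> + integral\<^sup>L \<mu> \<phi>"
      by (intro tendsto_intros ks_entropy_tendsto[OF \<mu>])
    show "\<exists>N. \<forall>m\<ge>N. ks_entropy \<nu> + integral\<^sup>L \<nu> \<phi> - e \<le> block_entropy \<mu> m / real m + integral\<^sup>L \<mu> \<phi>"
      using free_energy_le_weak_limit_block[where k = k, OF inv cont B k conv invariant_measuresD(1)[OF \<mu>] n]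
      by (intro exI[of _ 1]) simp
  qed
  then show "ks_entropy \<nu> + integral\<^sup>L \<nu> \<phi> \<le> ks_entropy \<mu> + integral\<^sup>L \<mu> \<phi> + e" by simp
qed

theorem mainTheorem2:
  fixes \<phi> :: "(nat \<Rightarrow> 'a::{finite, discrete_topology}) \<Rightarrow> real"
    and \<mu> :: "(nat \<Rightarrow> 'a) measure"
  assumes "continuous_on UNIV \<phi>"
    and "borel_prob \<mu>"
    and "weak_limit_point (\<lambda>k. mu_n \<phi> (Suc k)) \<mu>"
  shows "equilibrium_state \<phi> \<mu>"
proof -
  obtain r where "strict_mono r" and conv: "weak_conv (\<lambda>j. mu_n \<phi> (Suc (r j))) \<mu>"
    using assms(3) by (auto simp: weak_limit_point_def comp_def)
  have n: "filterlim (\<lambda>j. Suc (r j)) at_top sequentially"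
    using filterlim_compose[OF filterlim_Suc filterlim_subseq[OF \<open>strict_mono r\<close>]] by simp
  have \<mu>: "\<mu> \<in> invariant_measures"
    by (rule weak_limit_invariant[OF conv mu_n_invariant assms(2)]) simp
  have "ks_entropy \<nu> + integral\<^sup>L \<nu> \<phi> \<le> ks_entropy \<mu> + integral\<^sup>L \<mu> \<phi>"
    if "\<nu> \<in> invariant_measures" for \<nu>
    by (rule free_energy_le_weak_limit[OF that assms(1) conv \<mu> _ n]) simp
  then have "(SUP \<nu>\<in>invariant_measures. ks_entropy \<nu> + integral\<^sup>L \<nu> \<phi>) = ks_entropy \<mu> + integral\<^sup>L \<mu> \<phi>"
    by (intro cSup_eq_maximum imageI \<mu>) blast
  with \<mu> show ?thesis by (simp add: equilibrium_state_def)
qed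


end
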